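(* Let $p$ be a prime, $q=p^{m}$, and let $f(x)=\alpha_{d}x^{d}+\cdots+\alpha_{1}x\in\mathbb{F}_{q}[x]$ with $\alpha_{d}\neq 0$ and $d<p$. Let $a_{1},\dots,a_{d}$ be the Teichm\"uller lifts of $\alpha_{1},\dots,\alpha_{d}$ in the ring of integers $\mathcal{O}_{m}$ of the unramified extension of $\mathbb{Q}_{p}$ of degree $m$. Let $\pi\in\overline{\mathbb{Q}}_{p}$ satisfy $\pi^{p-1}=-p$, let $\theta(x)=\exp(\pi x-\pi x^{p})$, and write $$F(x)=\prod_{i=1}^{d}\theta(a_{i}x^{i})=\sum_{n\geq 0}h_{n}x^{n}.$$ Then, with $\mathbf{ord}_{p}$ the $p$-adic valuation normalized by $\mathbf{ord}_{p}(p)=1$: (i) $\mathbf{ord}_{p}h_{i}\geq \dfrac{i}{d(p-1)}$ for $0\leq i\leq p^{2}-1$; (ii) $\mathbf{ord}_{p}h_{i}\geq \dfrac{(p-1)i}{dp^{2}}$ for $i\geq p^{2}$.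
   Context: $\theta(x)=\exp(\pi x-\pi x^{p})$ is Dwork's splitting function, viewed as a formal power series $\sum_{i\ge0}b_i x^i$ with coefficients in $\mathbb{Q}_p(\pi)$; $F(x)$ is the formal power series product, and $h_n$ is its coefficient of $x^n$, i.e. $h_{n}=\sum_{i_{1}+2i_{2}+\cdots+di_{d}=n}a_{1}^{i_{1}}\cdots a_{d}^{i_{d}}b_{i_{1}}\cdots b_{i_{d}}$. The Teichm\"uller lift of $\alpha\in\mathbb{F}_q$ is the unique element of $\mathcal{O}_m$ reducing to $\alpha$ and satisfying $a^{q}=a$. *)

theory Defs
  imports "HOL-Computational_Algebra.Computational_Algebra" "HOL-Library.Extended_Real"
begin

text \<open>A nonarchimedean (exponential) valuation v on a field of characteristic 0,
  with v x = infinity exactly for x = 0, normalised by v p = 1.  Its restriction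
  to the rationals is then the p-adic valuation ord_p.  The algebraic closure of
  Q_p with ord_p is an instance.\<close>
definition nonarch_val :: "nat \<Rightarrow> ('a::field_char_0 \<Rightarrow> ereal) \<Rightarrow> bool" where
  "nonarch_val p v \<longleftrightarrow>
     (\<forall>x. v x = \<infinity> \<longleftrightarrow> x = 0) \<and> (\<forall>x. v x \<noteq> -\<infinity>) \<and>
     (\<forall>x y. v (x * y) = v x + v y) \<and>
     (\<forall>x y. min (v x) (v y) \<le> v (x + y)) \<and>
     v (of_nat p) = 1"

definition dwork_theta :: "nat \<Rightarrow> 'a::field_char_0 \<Rightarrow> 'a fps" where
  "dwork_theta p w = fps_exp w * fps_compose (fps_exp (- w)) (fps_X ^ p)"

definition dwork_F :: "nat \<Rightarrow> 'a::field_char_0 \<Rightarrow> nat \<Rightarrow> (nat \<Rightarrow> 'a) \<Rightarrow> 'a fps" where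
  "dwork_F p w d a = (\<Prod>i\<in>{1..d}. fps_compose (dwork_theta p w) (fps_const (a i) * fps_X ^ i))"

end

theory Submission
  imports Defs "HOL-Number_Theory.Residues"
begin

text \<open>
  Since \<open>w\<^sup>p / p = -w\<close>, Dwork's splitting function is \<open>\<theta>(x) = E\<^sub>1(w x)\<close>, where
  \<open>E\<^sub>K(x) = exp (\<Sum>k\<le>K. x\<^bsup>p\<^sup>k\<^esup> / p\<^sup>k)\<close> truncates the Artin-Hasse exponential.
  Dwork's identity \<open>E\<^sub>K\<^sub>+\<^sub>1(x)\<^sup>p = e\<^bsup>p x\<^esup> E\<^sub>K(x\<^sup>p)\<close>, the congruence
  \<open>f(x)\<^sup>p \<equiv> f(x\<^sup>p) mod p\<close> for series with p-integral coefficients and Legendre's bound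
  \<open>(p - 1) ord\<^sub>p(m!) < m\<close> show, by induction on the degree, that the coefficients of \<open>E\<^sub>K\<close>
  below degree \<open>p\<^bsup>K+1\<^esup>\<close> are p-integral. As \<open>v(w) = 1/(p - 1)\<close>, this gives
  \<open>v(\<theta>\<^sub>n) \<ge> n/(p - 1)\<close> for \<open>n < p\<^sup>2\<close>. For larger \<open>n\<close> write
  \<open>E\<^sub>1 = E\<^sub>K \<Prod>k=2..K. exp (-x\<^bsup>p\<^sup>k\<^esup> / p\<^sup>k)\<close> with \<open>K\<close> large: the coefficient of
  \<open>x\<^bsup>m p\<^sup>k\<^esup>\<close> in \<open>exp (-(w x)\<^bsup>p\<^sup>k\<^esup> / p\<^sup>k)\<close> has valuation at least
  \<open>m ((p\<^sup>k - 1)/(p - 1) - k) \<ge> m (p - 1) p\<^bsup>k-2\<^esup>\<close>. Substituting \<open>a\<^sub>i x\<^sup>i\<close> with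
  \<open>v(a\<^sub>i) \<ge> 0\<close> and \<open>i \<le> d\<close> divides the slopes by at most \<open>d\<close>, and products preserve them.
\<close>

section \<open>Power series\<close>

lemma fps_compose_monom_nth:
  fixes f :: "'a::comm_ring_1 fps"
  assumes "q \<ge> 1"
  shows "(f oo (fps_const c * fps_X ^ q)) $ n = (if q dvd n then c ^ (n div q) * f $ (n div q) else 0)"
proof -
  have power: "(fps_const c * fps_X ^ q) ^ i = fps_const (c ^ i) * fps_X ^ (q * i)" for i
    by (simp add: power_mult_distrib power_mult fps_const_power)
  have "(f oo (fps_const c * fps_X ^ q)) $ n = (\<Sum>i=0..n. if n = q * i then c ^ i * f $ i else 0)"
    unfolding fps_compose_nth power by (intro sum.cong) auto
  also have "\<dots> = (if q dvd n then c ^ (n div q) * f $ (n div q) else 0)"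
  proof (cases "q dvd n")
    case True
    then have "n div q \<in> {0..n}" "\<And>i. n = q * i \<longleftrightarrow> i = n div q"
      using assms by auto
    then show ?thesis using True by (simp add: sum.delta')
  qed (auto intro!: sum.neutral)
  finally show ?thesis .
qed

lemma fps_compose_X_power_nth:
  fixes f :: "'a::comm_ring_1 fps"
  assumes "q \<ge> 1"
  shows "(f oo fps_X ^ q) $ n = (if q dvd n then f $ (n div q) else 0)"
  using fps_compose_monom_nth[OF assms, of f 1 n] by simp

lemma fps_power_add_monom_nth:
  fixes F :: "'a::comm_ring_1 fps"
  assumes "n \<ge> 1" and "F $ 0 = 1"
  shows "((F + fps_const c * fps_X ^ n) ^ k) $ n = (F ^ k) $ n + of_nat k * c"
proof -
  define G where "G = F + fps_const c * fps_X ^ n"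
  define S where "S = (\<Sum>i<k. F ^ (k - Suc i) * G ^ i)"
  have "G $ 0 = 1" using assms by (simp add: G_def)
  then have "S $ 0 = of_nat k"
    using assms(2) by (simp add: S_def fps_sum_nth fps_nth_power_0)
  have "G ^ k - F ^ k = fps_const c * (fps_X ^ n * S)"
    unfolding S_def power_diff_sumr2 by (simp add: G_def mult.assoc)
  then have "(G ^ k) $ n - (F ^ k) $ n = c * (fps_X ^ n * S) $ n"
    by (metis fps_mult_left_const_nth fps_sub_nth)
  also have "\<dots> = c * of_nat k"
    using \<open>S $ 0 = of_nat k\<close> by (simp add: fps_X_power_mult_nth)
  finally show ?thesis by (simp add: G_def algebra_simps)
qed

lemma fps_mult_nth_eq_left:
  fixes f g :: "'a::comm_ring_1 fps"
  assumes "g $ 0 = 1" and "\<And>j. 0 < j \<Longrightarrow> j \<le> n \<Longrightarrow> g $ j = 0"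
  shows "(f * g) $ n = f $ n"
proof -
  have "(f * g) $ n = (\<Sum>i\<in>{n}. f $ i * g $ (n - i))"
    unfolding fps_mult_nth by (rule sum.mono_neutral_right) (auto simp: assms(2))
  then show ?thesis using assms(1) by simp
qed

definition fps_exp_monom :: "'a::field_char_0 \<Rightarrow> nat \<Rightarrow> 'a fps" where
  "fps_exp_monom c q = fps_exp c oo fps_X ^ q"

lemma fps_exp_monom_nth_0 [simp]: "fps_exp_monom c q $ 0 = 1"
  by (simp add: fps_exp_monom_def)

lemma fps_exp_monom_nth:
  "q \<ge> 1 \<Longrightarrow> fps_exp_monom c q $ n = (if q dvd n then c ^ (n div q) / fact (n div q) else 0)"
  by (simp add: fps_exp_monom_def fps_compose_X_power_nth)

lemma fps_exp_monom_mult: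
  "q \<ge> 1 \<Longrightarrow> fps_exp_monom c q * fps_exp_monom d q = fps_exp_monom (c + d) q"
  unfolding fps_exp_monom_def fps_exp_add_mult by (simp add: fps_compose_mult_distrib)

lemma fps_exp_monom_power:
  "q \<ge> 1 \<Longrightarrow> fps_exp_monom c q ^ k = fps_exp_monom (of_nat k * c) q"
  unfolding fps_exp_monom_def fps_exp_power_mult[symmetric] by (simp add: fps_compose_power)

lemma fps_exp_monom_compose_X_power:
  assumes "q \<ge> 1" "r \<ge> 1"
  shows "fps_exp_monom c q oo fps_X ^ r = fps_exp_monom c (q * r)"
proof -
  have "fps_exp_monom c q oo fps_X ^ r = fps_exp c oo (fps_X ^ q oo fps_X ^ r)"
    unfolding fps_exp_monom_def using assms by (intro fps_compose_assoc[symmetric]) auto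
  also have "fps_X ^ q oo fps_X ^ r = (fps_X ^ (q * r) :: 'a fps)"
    using assms by (subst fps_X_power_compose) (auto simp: power_mult[symmetric] mult.commute)
  finally show ?thesis unfolding fps_exp_monom_def .
qed

lemma fps_exp_monom_0 [simp]: "fps_exp_monom 0 q = 1"
  by (simp add: fps_exp_monom_def)

definition fps_dilate_rat :: "'a::field_char_0 \<Rightarrow> rat fps \<Rightarrow> 'a fps" where
  "fps_dilate_rat w f = Abs_fps (\<lambda>n. w ^ n * of_rat (f $ n))"

lemma fps_dilate_rat_nth [simp]: "fps_dilate_rat w f $ n = w ^ n * of_rat (f $ n)"
  by (simp add: fps_dilate_rat_def)

lemma fps_dilate_rat_mult: "fps_dilate_rat w (f * g) = fps_dilate_rat w f * fps_dilate_rat w g"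
proof (rule fps_ext)
  fix n
  have "w ^ n * of_rat (f $ i * g $ (n - i)) = (w ^ i * of_rat (f $ i)) * (w ^ (n - i) * of_rat (g $ (n - i)))"
    if "i \<in> {0..n}" for i
    using that by (simp add: of_rat_mult power_add[symmetric] ac_simps)
  then show "fps_dilate_rat w (f * g) $ n = (fps_dilate_rat w f * fps_dilate_rat w g) $ n"
    by (simp add: fps_mult_nth of_rat_sum sum_distrib_left)
qed

lemma fps_dilate_rat_prod: "fps_dilate_rat w (prod f S) = (\<Prod>k\<in>S. fps_dilate_rat w (f k))"
proof (induction S rule: infinite_finite_induct)
  case (infinite S)
  have "fps_dilate_rat w 1 = 1" by (rule fps_ext) simp
  then show ?case using infinite by simp
next
  case empty
  show ?case by (rule fps_ext) simp
qed (simp add: fps_dilate_rat_mult)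

lemma fps_dilate_rat_exp_monom:
  assumes "q \<ge> 1"
  shows "fps_dilate_rat w (fps_exp_monom c q) = fps_exp_monom (of_rat c * w ^ q) q"
proof (rule fps_ext)
  fix n
  have fact: "of_rat (fact m) = (fact m :: 'a)" for m
    by (metis of_nat_fact of_rat_of_nat_eq)
  show "fps_dilate_rat w (fps_exp_monom c q) $ n = fps_exp_monom (of_rat c * w ^ q) q $ n"
    using assms
    by (auto simp: fps_exp_monom_nth of_rat_divide of_rat_power fact power_mult_distrib
        simp flip: power_mult elim!: dvdE)
qed

section \<open>p-integral rationals\<close>

lemma fermat_little_int:
  fixes a :: int
  assumes "prime p"
  shows "[a ^ p = a] (mod int p)"
proof -
  define n where "n = nat (a mod int p)"
  have "p > 0" using assms prime_gt_0_nat by blast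
  then have a_n: "[a = int n] (mod int p)"
    unfolding n_def by (simp add: cong_def)
  have "[n ^ p = n] (mod p)"
  proof (cases "p dvd n")
    case True
    then have "p dvd n ^ p" using \<open>p > 0\<close> by (meson dvd_power dvd_trans)
    then show ?thesis using True by (simp add: cong_def dvd_imp_mod_0)
  next
    case False
    then have "[n ^ (p - 1) * n = 1 * n] (mod p)"
      using fermat_theorem[OF assms] cong_scalar_right by blast
    then show ?thesis using \<open>p > 0\<close> by (simp add: power_Suc2[symmetric])
  qed
  then have "[int n ^ p = int n] (mod int p)"
    by (metis cong_int_iff of_nat_power)
  then show ?thesis using a_n cong_pow[OF a_n, of p] by (meson cong_sym cong_trans)
qed

definition p_integral :: "nat \<Rightarrow> rat \<Rightarrow> bool" where
  "p_integral p r \<longleftrightarrow> (\<exists>a b :: int. \<not> int p dvd b \<and> r = of_int a / of_int b)"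

definition p_divisible :: "nat \<Rightarrow> rat \<Rightarrow> bool" where
  "p_divisible p r \<longleftrightarrow> p_integral p (r / of_nat p)"

locale prime_number =
  fixes p :: nat
  assumes prime_p: "prime p"
begin

lemma p_gt_1: "1 < p"
  using prime_p prime_gt_1_nat by blast

lemma real_p_minus_1: "real (p - 1) = real p - 1"
  using p_gt_1 by (simp add: of_nat_diff)

lemma real_p_minus_1_gt_0: "0 < real p - 1"
  using p_gt_1 by simp

lemma p_integral_of_int [simp]: "p_integral p (of_int a)"
  unfolding p_integral_def using p_gt_1 by (intro exI[of _ a] exI[of _ 1]) auto

lemma p_integral_of_nat [simp]: "p_integral p (of_nat n)"
  using p_integral_of_int[of "int n"] by simp

lemma p_integral_0 [simp]: "p_integral p 0" and p_integral_1 [simp]: "p_integral p 1"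
  using p_integral_of_int[of 0] p_integral_of_int[of 1] by simp_all

lemma not_p_dvd_mult: "\<not> int p dvd b \<Longrightarrow> \<not> int p dvd d \<Longrightarrow> \<not> int p dvd b * d"
  using prime_p by (simp add: prime_dvd_mult_iff)

lemma p_integral_add: "p_integral p r \<Longrightarrow> p_integral p s \<Longrightarrow> p_integral p (r + s)"
  unfolding p_integral_def
proof (elim exE conjE)
  fix a b c d :: int
  assume "\<not> int p dvd b" "r = of_int a / of_int b" "\<not> int p dvd d" "s = of_int c / of_int d"
  moreover from this have "b \<noteq> 0" "d \<noteq> 0" by auto
  ultimately show "\<exists>a b. \<not> int p dvd b \<and> r + s = of_int a / of_int b"
    by (intro exI[of _ "a * d + c * b"] exI[of _ "b * d"]) (auto simp: not_p_dvd_mult field_simps)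
qed

lemma p_integral_mult: "p_integral p r \<Longrightarrow> p_integral p s \<Longrightarrow> p_integral p (r * s)"
  unfolding p_integral_def
proof (elim exE conjE)
  fix a b c d :: int
  assume "\<not> int p dvd b" "r = of_int a / of_int b" "\<not> int p dvd d" "s = of_int c / of_int d"
  then show "\<exists>a b. \<not> int p dvd b \<and> r * s = of_int a / of_int b"
    by (intro exI[of _ "a * c"] exI[of _ "b * d"]) (auto simp: not_p_dvd_mult)
qed

lemma p_integral_uminus: "p_integral p r \<Longrightarrow> p_integral p (- r)"
  using p_integral_mult[OF p_integral_of_int[of "-1"]] by simp

lemma p_integral_sum: "(\<And>i. i \<in> S \<Longrightarrow> p_integral p (f i)) \<Longrightarrow> p_integral p (sum f S)"
  by (induction S rule: infinite_finite_induct) (auto simp: p_integral_add)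

lemma p_divisible_add: "p_divisible p r \<Longrightarrow> p_divisible p s \<Longrightarrow> p_divisible p (r + s)"
  unfolding p_divisible_def using p_integral_add by (simp add: add_divide_distrib)

lemma p_divisible_uminus: "p_divisible p r \<Longrightarrow> p_divisible p (- r)"
  unfolding p_divisible_def using p_integral_uminus by simp

lemma p_divisible_diff: "p_divisible p r \<Longrightarrow> p_divisible p s \<Longrightarrow> p_divisible p (r - s)"
  using p_divisible_add[OF _ p_divisible_uminus] by simp

lemma p_divisible_0 [simp]: "p_divisible p 0"
  by (simp add: p_divisible_def)

lemma p_divisible_sum: "(\<And>i. i \<in> S \<Longrightarrow> p_divisible p (f i)) \<Longrightarrow> p_divisible p (sum f S)"
  by (induction S rule: infinite_finite_induct) (auto simp: p_divisible_add)

lemma p_divisible_mult_left: "p_integral p r \<Longrightarrow> p_divisible p s \<Longrightarrow> p_divisible p (r * s)"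
  unfolding p_divisible_def using p_integral_mult by (metis times_divide_eq_right)

lemma p_divisible_p_mult_iff: "p_divisible p (of_nat p * r) \<longleftrightarrow> p_integral p r"
  unfolding p_divisible_def using p_gt_1 by simp

lemma p_divisible_of_int_divide:
  assumes "int p dvd a" "\<not> int p dvd b"
  shows "p_divisible p (of_int a / of_int b)"
proof -
  obtain k where "a = int p * k" using assms(1) by (auto elim: dvdE)
  then have "of_int a / of_int b / of_nat p = (of_int k / of_int b :: rat)"
    using p_gt_1 by simp
  then show ?thesis unfolding p_divisible_def p_integral_def using assms(2) by metis
qed

lemma p_divisible_fermat:
  assumes "p_integral p c"
  shows "p_divisible p (c ^ p - c)"
proof -
  obtain a b where b: "\<not> int p dvd b" and c: "c = of_int a / of_int b"
    using assms p_integral_def by auto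
  have "b \<noteq> 0" using b by auto
  then have "c ^ p - c = of_int (a ^ p * b - a * b ^ p) / of_int (b ^ p * b)"
    by (simp add: c power_divide field_simps)
  moreover have "[a ^ p * b = a * b ^ p] (mod int p)"
    using fermat_little_int[OF prime_p] cong_mult by (metis cong_sym mult.commute)
  then have "int p dvd a ^ p * b - a * b ^ p"
    by (simp add: cong_iff_dvd_diff)
  moreover have "\<not> int p dvd b ^ p * b"
    using b prime_p by (metis not_p_dvd_mult prime_dvd_power_int prime_nat_int_transfer)
  ultimately show ?thesis by (metis p_divisible_of_int_divide)
qed

lemma multiplicity_fact_div:
  "multiplicity p (fact m :: nat) = m div p + multiplicity p (fact (m div p) :: nat)"
proof (induction m)
  case 0
  then show ?case by simp
next
  case (Suc m)
  have fact_Suc: "multiplicity p (fact (Suc n) :: nat) = multiplicity p (Suc n) + multiplicity p (fact n :: nat)" for n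
    using prime_elem_multiplicity_mult_distrib[OF prime_imp_prime_elem[OF prime_p], of "Suc n" "fact n"]
    by (simp add: fact_Suc)
  show ?case
  proof (cases "p dvd Suc m")
    case True
    then obtain k where k: "Suc m = p * k" by blast
    have "Suc m div p = k" using k p_gt_1 by simp
    then have "Suc (m div p) = k" using True by (simp add: div_Suc dvd_eq_mod_eq_0)
    moreover have "k \<noteq> 0" using k by (cases k) auto
    ultimately have "multiplicity p (Suc m) = Suc (multiplicity p (Suc (m div p)))"
      using k p_gt_1 by (simp add: multiplicity_times_same)
    then show ?thesis using Suc fact_Suc[of m] fact_Suc[of "m div p"] True
      by (simp add: div_Suc dvd_eq_mod_eq_0)
  next
    case False
    then show ?thesis using Suc fact_Suc[of m]
      by (simp add: div_Suc dvd_eq_mod_eq_0 not_dvd_imp_multiplicity_0)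
  qed
qed

lemma multiplicity_fact_le: "(p - 1) * multiplicity p (fact m :: nat) \<le> m - 1"
proof (induction m rule: less_induct)
  case (less m)
  define q where "q = m div p"
  show ?case
  proof (cases "q = 0")
    case True
    then show ?thesis using multiplicity_fact_div[of m] by (simp add: q_def)
  next
    case False
    then have "q < m" using p_gt_1 div_less_dividend[of m p] by (cases "m = 0") (auto simp: q_def)
    then have "(p - 1) * multiplicity p (fact m :: nat) \<le> (p - 1) * q + (q - 1)"
      using less.IH[of q] multiplicity_fact_div[of m] by (simp add: q_def algebra_simps)
    also have "\<dots> \<le> m - 1"
    proof -
      have "(p - 1) * q + q = p * q" using p_gt_1 by (simp add: diff_mult_distrib)
      moreover have "p * q \<le> m" unfolding q_def by (simp add: times_div_less_eq_dividend)
      ultimately show ?thesis using False by linarith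
    qed
    finally show ?thesis .
  qed
qed

lemma fact_p_power_decomposition:
  obtains e u :: nat where "fact m = p ^ e * u" "\<not> p dvd u" "(p - 1) * e \<le> m - 1"
proof -
  obtain u where "fact m = p ^ multiplicity p (fact m :: nat) * u" "\<not> p dvd u"
    using multiplicity_decompose'[of "fact m :: nat" p] prime_p by (metis fact_nonzero not_prime_unit)
  then show ?thesis using that multiplicity_fact_le by blast
qed

lemma p_divisible_p_power_div_fact:
  assumes "j \<ge> 1"
  shows "p_divisible p (of_nat p ^ j / fact j)"
proof -
  obtain e u where fact_j: "fact j = p ^ e * u" and u: "\<not> p dvd u" and e: "(p - 1) * e \<le> j - 1"
    by (rule fact_p_power_decomposition)
  have "1 \<le> p - 1" using p_gt_1 by linarith
  then have "e \<le> (p - 1) * e" using mult_le_mono1[of 1 "p - 1" e] by simp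
  then have "e < j" using e assms by linarith
  have "(fact j :: rat) = of_nat p ^ e * of_nat u"
    by (metis fact_j of_nat_fact of_nat_mult of_nat_power)
  moreover have "(of_nat p ^ j :: rat) = of_nat p ^ (j - e) * of_nat p ^ e"
    using \<open>e < j\<close> by (simp flip: power_add)
  ultimately have "of_nat p ^ j / fact j = (of_int (int p ^ (j - e)) / of_int (int u) :: rat)"
    using p_gt_1 by simp
  moreover have "int p dvd int p ^ (j - e)" using \<open>e < j\<close> by simp
  moreover have "\<not> int p dvd int u" using u by simp
  ultimately show ?thesis by (metis p_divisible_of_int_divide)
qed

end

section \<open>The truncated Artin-Hasse exponential\<close>

definition p_integral_upto :: "nat \<Rightarrow> nat \<Rightarrow> rat fps \<Rightarrow> bool" where
  "p_integral_upto p n f \<longleftrightarrow> (\<forall>i\<le>n. p_integral p (f $ i))"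

definition artin_hasse_partial :: "nat \<Rightarrow> nat \<Rightarrow> rat fps" where
  "artin_hasse_partial p K = (\<Prod>k\<le>K. fps_exp_monom (1 / of_nat p ^ k) (p ^ k))"

lemma artin_hasse_partial_nth_0 [simp]: "artin_hasse_partial p K $ 0 = 1"
  by (induction K) (simp_all add: artin_hasse_partial_def)

context prime_number
begin

lemma p_integral_upto_mult:
  "p_integral_upto p n f \<Longrightarrow> p_integral_upto p n g \<Longrightarrow> p_integral_upto p n (f * g)"
  unfolding p_integral_upto_def fps_mult_nth by (auto intro!: p_integral_sum p_integral_mult)

lemma p_integral_upto_power: "p_integral_upto p n f \<Longrightarrow> p_integral_upto p n (f ^ k)"
proof (induction k)
  case 0
  show ?case by (simp add: p_integral_upto_def)
qed (simp add: p_integral_upto_mult)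

lemma p_divisible_power_add_nth:
  assumes A: "p_integral_upto p n A" and B: "p_integral_upto p n B"
  shows "p_divisible p (((A + B) ^ p) $ n - (A ^ p) $ n - (B ^ p) $ n)"
proof -
  define M where "M = (\<Sum>k\<in>{1..p - 1}. of_nat (p choose k) * A ^ k * B ^ (p - k))"
  have "{..p} = insert 0 (insert p {1..p - 1})" using p_gt_1 by auto
  then have "(A + B) ^ p = B ^ p + (A ^ p + M)"
    unfolding binomial_ring M_def using p_gt_1 by simp
  moreover have "p_divisible p ((of_nat (p choose k) * A ^ k * B ^ (p - k)) $ n)" if k: "k \<in> {1..p - 1}" for k
  proof -
    have "p dvd p choose k"
      using k prime_p p_gt_1 by (intro dvd_choose_prime) auto
    then obtain t where t: "p choose k = p * t" ..
    have "p_integral p ((A ^ k * B ^ (p - k)) $ n)"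
      using p_integral_upto_mult[OF p_integral_upto_power[OF A] p_integral_upto_power[OF B]]
      by (simp add: p_integral_upto_def)
    then show ?thesis
      using p_divisible_p_mult_iff[of "of_nat t * (A ^ k * B ^ (p - k)) $ n"]
      by (simp add: t p_integral_mult fps_of_nat[symmetric] mult.assoc)
  qed
  ultimately show ?thesis by (auto simp: M_def fps_sum_nth intro!: p_divisible_sum)
qed

lemma p_divisible_frobenius_nth:
  "p_integral_upto p n f \<Longrightarrow> p_divisible p ((f ^ p) $ n - (f oo fps_X ^ p) $ n)"
proof (induction n arbitrary: f rule: less_induct)
  case (less n f)
  define A where "A = fps_const (f $ 0)"
  define g where "g = fps_shift 1 f"
  define B where "B = fps_X * g"
  have f: "f = A + B" by (auto simp: fps_eq_iff A_def B_def g_def)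
  have A_int: "p_integral_upto p n A" and B_int: "p_integral_upto p n B"
    using less.prems by (auto simp: p_integral_upto_def A_def B_def g_def)
  have X_p_0: "(fps_X ^ p :: rat fps) $ 0 = 0" using p_gt_1 by simp
  have "A oo fps_X ^ p = A" by (simp add: A_def)
  moreover have "B oo fps_X ^ p = fps_X ^ p * (g oo fps_X ^ p)"
    by (simp add: B_def fps_compose_mult_distrib[OF X_p_0] fps_X_fps_compose_startby0[OF X_p_0])
  ultimately have "f oo fps_X ^ p = A + fps_X ^ p * (g oo fps_X ^ p)"
    by (metis f fps_compose_add_distrib)
  moreover have "B ^ p = fps_X ^ p * g ^ p" by (simp add: B_def power_mult_distrib)
  ultimately have split: "(f ^ p) $ n - (f oo fps_X ^ p) $ n =
      (((A + B) ^ p) $ n - (A ^ p) $ n - (B ^ p) $ n) + ((A ^ p) $ n - A $ n)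
      + ((fps_X ^ p * g ^ p) $ n - (fps_X ^ p * (g oo fps_X ^ p)) $ n)"
    by (simp add: f)
  have "p_divisible p ((A ^ p) $ n - A $ n)"
    using p_divisible_fermat less.prems by (cases n) (auto simp: A_def p_integral_upto_def fps_const_power)
  moreover have "p_divisible p ((fps_X ^ p * g ^ p) $ n - (fps_X ^ p * (g oo fps_X ^ p)) $ n)"
  proof (cases "n < p")
    case False
    then have "p_integral_upto p (n - p) g"
      using less.prems p_gt_1 by (auto simp: p_integral_upto_def g_def)
    then show ?thesis using less.IH[of "n - p" g] False p_gt_1 by (simp add: fps_X_power_mult_nth)
  qed (simp add: fps_X_power_mult_nth)
  ultimately show ?case
    unfolding split by (intro p_divisible_add p_divisible_power_add_nth A_int B_int)
qed

lemma artin_hasse_partial_Suc_power: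
  "artin_hasse_partial p (Suc K) ^ p = fps_exp (of_nat p) * (artin_hasse_partial p K oo fps_X ^ p)"
proof -
  define E :: "nat \<Rightarrow> rat fps" where "E k = fps_exp_monom (1 / of_nat p ^ k) (p ^ k)" for k
  have X_p_0: "(fps_X ^ p :: rat fps) $ 0 = 0" using p_gt_1 by simp
  have E_Suc: "E (Suc k) ^ p = E k oo fps_X ^ p" for k
    using p_gt_1 by (simp add: E_def fps_exp_monom_power fps_exp_monom_compose_X_power mult.commute)
  have "artin_hasse_partial p (Suc K) ^ p = (\<Prod>k\<le>Suc K. E k ^ p)"
    unfolding artin_hasse_partial_def E_def prod_power_distrib ..
  also have "\<dots> = E 0 ^ p * (\<Prod>k\<le>K. E k oo fps_X ^ p)"
    unfolding prod.atMost_Suc_shift E_Suc ..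
  also have "E 0 ^ p = fps_exp (of_nat p)"
    by (simp add: E_def fps_exp_monom_def fps_exp_power_mult)
  also have "(\<Prod>k\<le>K. E k oo fps_X ^ p) = artin_hasse_partial p K oo fps_X ^ p"
    unfolding artin_hasse_partial_def E_def fps_compose_prod_distrib[OF X_p_0] ..
  finally show ?thesis .
qed

lemma artin_hasse_partial_power_nth:
  assumes "n < p ^ Suc K"
  shows "(artin_hasse_partial p K ^ p) $ n = (fps_exp (of_nat p) * (artin_hasse_partial p K oo fps_X ^ p)) $ n"
proof -
  define E :: "rat fps" where "E = fps_exp_monom (1 / of_nat p ^ Suc K) (p ^ Suc K) ^ p"
  have "E $ 0 = 1" by (simp add: E_def fps_nth_power_0)
  moreover have "E $ j = 0" if "0 < j" "j \<le> n" for j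
  proof -
    have "\<not> p ^ Suc K dvd j" using that assms by (auto dest: dvd_imp_le)
    then show ?thesis using p_gt_1 by (simp add: E_def fps_exp_monom_power fps_exp_monom_nth)
  qed
  ultimately have "(artin_hasse_partial p K ^ p) $ n = (artin_hasse_partial p K ^ p * E) $ n"
    by (simp add: fps_mult_nth_eq_left)
  also have "artin_hasse_partial p K ^ p * E = artin_hasse_partial p (Suc K) ^ p"
    by (simp add: E_def artin_hasse_partial_def power_mult_distrib)
  finally show ?thesis by (simp only: artin_hasse_partial_Suc_power)
qed

lemma p_divisible_exp_p_mult_nth:
  assumes "\<And>i. i < n \<Longrightarrow> p_integral p (g $ i)"
  shows "p_divisible p ((fps_exp (of_nat p) * g) $ n - g $ n)"
proof -
  have "(fps_exp (of_nat p) * g) $ n = g $ n + (\<Sum>i\<in>{1..n}. g $ (n - i) * (of_nat p ^ i / fact i))"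
    unfolding fps_mult_nth by (simp add: sum.atLeast_Suc_atMost[of 0 n] mult.commute)
  moreover have "p_divisible p (g $ (n - i) * (of_nat p ^ i / fact i))" if "i \<in> {1..n}" for i
    using that assms p_divisible_p_power_div_fact by (intro p_divisible_mult_left) auto
  ultimately show ?thesis by (auto intro!: p_divisible_sum)
qed

lemma p_integral_artin_hasse_partial:
  "n < p ^ Suc K \<Longrightarrow> p_integral p (artin_hasse_partial p K $ n)"
proof (induction n rule: less_induct)
  case (less n)
  define f where "f = artin_hasse_partial p K"
  define c where "c = f $ n"
  define f' where "f' = f - fps_const c * fps_X ^ n"
  show ?case
  proof (cases "n = 0")
    case False
    have IH: "p_integral p (f $ i)" if "i < n" for i
      using less that by (simp add: f_def)
    have f'_int: "p_integral_upto p n f'"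
      using IH by (auto simp: p_integral_upto_def f'_def c_def)
    have "f' $ 0 = 1" using False by (simp add: f'_def f_def)
    have "n div p < n" using False p_gt_1 by simp
    then have "(f' oo fps_X ^ p) $ n = (f oo fps_X ^ p) $ n"
      using p_gt_1 by (simp add: f'_def fps_compose_X_power_nth fps_compose_sub_distrib)
    txt \<open>Splitting off the top coefficient \<open>c\<close> isolates \<open>p c\<close> in Dwork's identity; the
      remaining terms are divisible by \<open>p\<close> by the Frobenius congruence and the induction hypothesis.\<close>
    have "of_nat p * c = (f ^ p) $ n - (f' ^ p) $ n"
      using fps_power_add_monom_nth[of n f' c p] False \<open>f' $ 0 = 1\<close> by (simp add: f'_def)
    also have "\<dots> = ((fps_exp (of_nat p) * (f oo fps_X ^ p)) $ n - (f oo fps_X ^ p) $ n)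
        - ((f' ^ p) $ n - (f' oo fps_X ^ p) $ n)"
      using artin_hasse_partial_power_nth[OF less.prems] \<open>(f' oo fps_X ^ p) $ n = _\<close>
      by (simp add: f_def)
    finally have pc: "of_nat p * c = \<dots>" .
    have "p_integral p ((f oo fps_X ^ p) $ i)" if "i < n" for i
      using IH[of "i div p"] that p_gt_1 div_le_dividend[of i p]
      by (simp add: fps_compose_X_power_nth)
    then have "p_divisible p ((fps_exp (of_nat p) * (f oo fps_X ^ p)) $ n - (f oo fps_X ^ p) $ n)"
      by (rule p_divisible_exp_p_mult_nth)
    then have "p_divisible p (of_nat p * c)"
      unfolding pc using p_divisible_frobenius_nth[OF f'_int] by (rule p_divisible_diff)
    then show ?thesis by (simp add: p_divisible_p_mult_iff f_def c_def)
  qed simp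
qed

lemma artin_hasse_partial_1_eq:
  assumes "1 \<le> K"
  shows "artin_hasse_partial p 1
    = artin_hasse_partial p K * (\<Prod>k\<in>{2..K}. fps_exp_monom (- (1 / of_nat p ^ k)) (p ^ k))"
proof -
  define E :: "rat \<Rightarrow> nat \<Rightarrow> rat fps" where "E s k = fps_exp_monom (s / of_nat p ^ k) (p ^ k)" for s k
  have "{..K} = {..1} \<union> {2..K}" using assms by auto
  then have "artin_hasse_partial p K = artin_hasse_partial p 1 * (\<Prod>k\<in>{2..K}. E 1 k)"
    unfolding artin_hasse_partial_def E_def by (subst prod.union_disjoint[symmetric]) auto
  moreover have "E 1 k * E (- 1) k = 1" for k
    using p_gt_1 by (simp add: E_def fps_exp_monom_mult)
  ultimately have "artin_hasse_partial p K * (\<Prod>k\<in>{2..K}. E (- 1) k) = artin_hasse_partial p 1"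
    by (simp add: mult.assoc flip: prod.distrib)
  then show ?thesis by (simp add: E_def)
qed

lemma dwork_theta_eq_dilate:
  fixes w :: "'a::field_char_0"
  assumes "w ^ (p - 1) = - of_nat p"
  shows "dwork_theta p w = fps_dilate_rat w (artin_hasse_partial p 1)"
proof -
  have "w ^ p = w ^ (p - 1) * w" using p_gt_1 by (simp flip: power_Suc2)
  then have "of_rat (1 / of_nat p) * w ^ p = - w" using assms p_gt_1 by (simp add: of_rat_divide)
  moreover have "artin_hasse_partial p 1 = fps_exp_monom 1 1 * fps_exp_monom (1 / of_nat p) p"
    by (simp add: artin_hasse_partial_def)
  ultimately have "fps_dilate_rat w (artin_hasse_partial p 1) = fps_exp_monom w 1 * fps_exp_monom (- w) p"
    using p_gt_1 by (simp add: fps_dilate_rat_mult fps_dilate_rat_exp_monom)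
  then show ?thesis by (simp add: dwork_theta_def fps_exp_monom_def)
qed

end

section \<open>Valuations\<close>

locale p_valued_field = prime_number +
  fixes v :: "'a::field_char_0 \<Rightarrow> ereal"
  assumes nonarch_val: "nonarch_val p v"
begin

lemma v_eq_infinity_iff: "v x = \<infinity> \<longleftrightarrow> x = 0"
  and v_not_minus_infinity: "v x \<noteq> -\<infinity>"
  and v_mult: "v (x * y) = v x + v y"
  and v_add_ge_min: "min (v x) (v y) \<le> v (x + y)"
  and v_of_nat_p: "v (of_nat p) = 1"
  using nonarch_val unfolding nonarch_val_def by blast+

lemma v_finite:
  assumes "x \<noteq> 0"
  obtains r where "v x = ereal r"
  using v_eq_infinity_iff[of x] v_not_minus_infinity[of x] assms by (cases "v x") auto

lemma v_zero [simp]: "v 0 = \<infinity>"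
  using v_eq_infinity_iff by simp

lemma v_one [simp]: "v 1 = 0"
proof -
  obtain r where "v 1 = ereal r" using v_finite[of 1] by auto
  moreover have "v 1 = v 1 + v 1" using v_mult[of 1 1] by simp
  ultimately show ?thesis by (simp add: zero_ereal_def)
qed

lemma v_inverse:
  assumes "v x = ereal c"
  shows "v (inverse x) = ereal (- c)"
proof -
  have "x \<noteq> 0" using assms v_eq_infinity_iff[of x] by auto
  then obtain r where r: "v (inverse x) = ereal r" using v_finite[of "inverse x"] by auto
  have "0 = v x + v (inverse x)" using \<open>x \<noteq> 0\<close> v_mult[of x "inverse x"] by simp
  then show ?thesis using assms r by (simp add: zero_ereal_def)
qed

lemma v_power: "v x = ereal c \<Longrightarrow> v (x ^ n) = ereal (real n * c)"
  by (induction n) (simp_all add: v_mult zero_ereal_def algebra_simps)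

lemma v_uminus [simp]: "v (- x) = v x"
proof -
  obtain r where r: "v (-1) = ereal r" using v_finite[of "-1"] by auto
  moreover have "v 1 = v (-1) + v (-1)" using v_mult[of "-1" "-1"] by simp
  ultimately have "v (-1) = 0" by (simp add: zero_ereal_def)
  then show ?thesis using v_mult[of "-1" x] by simp
qed

lemma v_mult_ge: "ereal a \<le> v x \<Longrightarrow> ereal b \<le> v y \<Longrightarrow> ereal (a + b) \<le> v (x * y)"
  using add_mono[of "ereal a" "v x" "ereal b" "v y"] by (simp add: v_mult)

lemma v_add_ge: "ereal c \<le> v x \<Longrightarrow> ereal c \<le> v y \<Longrightarrow> ereal c \<le> v (x + y)"
  using v_add_ge_min[of x y] by (meson min.boundedI order_trans)

lemma v_sum_ge: "(\<And>i. i \<in> S \<Longrightarrow> ereal c \<le> v (f i)) \<Longrightarrow> ereal c \<le> v (sum f S)"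
  by (induction S rule: infinite_finite_induct) (auto simp: v_add_ge)

lemma v_power_ge: "ereal a \<le> v x \<Longrightarrow> ereal (real n * a) \<le> v (x ^ n)"
  by (induction n) (auto simp: algebra_simps dest: v_mult_ge)

lemma v_of_nat_ge: "0 \<le> v (of_nat n)"
proof (induction n)
  case (Suc n)
  then show ?case using v_add_ge[of 0 1 "of_nat n"] by (simp add: zero_ereal_def)
qed simp

lemma v_of_int_ge: "0 \<le> v (of_int k)"
  by (cases k rule: int_cases) (simp_all add: v_of_nat_ge del: of_nat_Suc)

lemma v_of_int_coprime:
  assumes "\<not> int p dvd b"
  shows "v (of_int b) = 0"
proof (rule ccontr)
  assume v_b: "v (of_int b) \<noteq> 0"
  have "prime (int p)" using prime_p by simp
  then have "coprime b (int p)"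
    using assms prime_imp_coprime coprime_commute by blast
  then obtain s t where st: "s * b + t * int p = 1"
    by (metis bezout_int coprime_iff_gcd_eq_1)
  have "b \<noteq> 0" using assms by auto
  then obtain r where r: "v (of_int b) = ereal r" using v_finite[of "of_int b"] by auto
  define \<delta> where "\<delta> = min r 1"
  have "\<delta> > 0" using v_b r v_of_int_ge[of b] by (simp add: \<delta>_def zero_ereal_def)
  have "ereal (0 + \<delta>) \<le> v (of_int s * of_int b)"
    using v_mult_ge[of 0 "of_int s" \<delta> "of_int b"] v_of_int_ge[of s] r by (simp add: \<delta>_def zero_ereal_def)
  moreover have "ereal (0 + \<delta>) \<le> v (of_int t * of_nat p)"
    using v_mult_ge[of 0 "of_int t" \<delta> "of_nat p"] v_of_int_ge[of t] v_of_nat_p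
    by (simp add: \<delta>_def zero_ereal_def one_ereal_def)
  ultimately have "ereal \<delta> \<le> v (of_int (s * b + t * int p))"
    using v_add_ge by simp
  then show False using st \<open>\<delta> > 0\<close> by (simp add: zero_ereal_def)
qed

lemma v_of_rat_ge: "p_integral p r \<Longrightarrow> 0 \<le> v (of_rat r)"
proof (unfold p_integral_def, elim exE conjE)
  fix a b :: int
  assume b: "\<not> int p dvd b" and r: "r = of_int a / of_int b"
  have "v (inverse (of_int b :: 'a)) = 0"
    using v_inverse[of "of_int b" 0] v_of_int_coprime[OF b] by (simp add: zero_ereal_def)
  then show "0 \<le> v (of_rat r)"
    using v_mult_ge[of 0 "of_int a" 0 "inverse (of_int b)"] v_of_int_ge[of a]
    by (simp add: r divide_inverse of_rat_mult of_rat_inverse zero_ereal_def)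
qed

lemma v_of_nat_p_power: "v (of_nat p ^ j) = ereal (real j)"
  using v_power[of "of_nat p" 1 j] v_of_nat_p by (simp add: one_ereal_def)

lemma v_inverse_fact_ge: "ereal (- (real m / (real p - 1))) \<le> v (inverse (fact m))"
proof -
  obtain e u where fact_m: "fact m = p ^ e * u" and u: "\<not> p dvd u" and e: "(p - 1) * e \<le> m - 1"
    by (rule fact_p_power_decomposition)
  have "(fact m :: 'a) = of_nat p ^ e * of_nat u"
    by (metis fact_m of_nat_fact of_nat_mult of_nat_power)
  moreover have "v (of_nat u) = 0" using v_of_int_coprime[of "int u"] u by simp
  ultimately have "v (fact m) = ereal (real e)"
    by (simp add: v_mult v_of_nat_p_power)
  then have "v (inverse (fact m)) = ereal (- real e)" by (rule v_inverse)
  moreover have "real ((p - 1) * e) \<le> real m" using e by linarith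
  then have "(real p - 1) * real e \<le> real m" using p_gt_1 by (simp add: of_nat_diff)
  then have "real e \<le> real m / (real p - 1)" using p_gt_1 by (simp add: field_simps)
  ultimately show ?thesis by simp
qed

lemma v_fps_exp_monom_nth_ge:
  assumes "q \<ge> 1" and "ereal a \<le> v c"
  shows "ereal (real n / real q * (a - 1 / (real p - 1))) \<le> v (fps_exp_monom c q $ n)"
proof (cases "q dvd n")
  case True
  then obtain m where n: "n = q * m" ..
  have "ereal (real m * a + - (real m / (real p - 1))) \<le> v (c ^ m * inverse (fact m))"
    by (intro v_mult_ge v_power_ge assms(2) v_inverse_fact_ge)
  moreover have "real n / real q = real m" using n assms(1) by simp
  ultimately show ?thesis
    using assms(1) by (simp add: fps_exp_monom_nth n divide_inverse algebra_simps)
qed (use assms(1) in \<open>simp add: fps_exp_monom_nth\<close>)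

definition coeffs_val_ge :: "real \<Rightarrow> nat \<Rightarrow> 'a fps \<Rightarrow> bool" where
  "coeffs_val_ge c N f \<longleftrightarrow> (\<forall>n<N. ereal (c * real n) \<le> v (f $ n))"

lemma coeffs_val_ge_one: "coeffs_val_ge c N 1"
  by (simp add: coeffs_val_ge_def zero_ereal_def)

lemma coeffs_val_ge_mult:
  assumes "coeffs_val_ge c N f" and "coeffs_val_ge c N g"
  shows "coeffs_val_ge c N (f * g)"
  unfolding coeffs_val_ge_def
proof (intro allI impI)
  fix n assume "n < N"
  have "ereal (c * real i + c * real (n - i)) \<le> v (f $ i * g $ (n - i))" if "i \<in> {0..n}" for i
  proof (rule v_mult_ge)
    show "ereal (c * real i) \<le> v (f $ i)" "ereal (c * real (n - i)) \<le> v (g $ (n - i))"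
      using that \<open>n < N\<close> assms unfolding coeffs_val_ge_def by (meson atLeastAtMost_iff diff_le_self le_less_trans)+
  qed
  then show "ereal (c * real n) \<le> v ((f * g) $ n)"
    unfolding fps_mult_nth by (intro v_sum_ge) (simp add: of_nat_diff algebra_simps)
qed

lemma coeffs_val_ge_prod:
  "(\<And>k. k \<in> S \<Longrightarrow> coeffs_val_ge c N (f k)) \<Longrightarrow> coeffs_val_ge c N (prod f S)"
  by (induction S rule: infinite_finite_induct) (auto simp: coeffs_val_ge_one coeffs_val_ge_mult)

lemma coeffs_val_ge_mono:
  assumes "coeffs_val_ge c N f" and "c' \<le> c" and "N' \<le> N"
  shows "coeffs_val_ge c' N' f"
  unfolding coeffs_val_ge_def
proof (intro allI impI)
  fix n assume "n < N'"
  then have "ereal (c * real n) \<le> v (f $ n)" using assms by (simp add: coeffs_val_ge_def)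
  moreover have "c' * real n \<le> c * real n" using assms(2) by (simp add: mult_right_mono)
  ultimately show "ereal (c' * real n) \<le> v (f $ n)" by (meson ereal_less_eq(3) order_trans)
qed

lemma coeffs_val_ge_compose_monom:
  assumes f: "coeffs_val_ge c N f" and "0 \<le> c" and "0 \<le> v a" and "1 \<le> i" "i \<le> d"
  shows "coeffs_val_ge (c / real d) N (f oo (fps_const a * fps_X ^ i))"
  unfolding coeffs_val_ge_def
proof (intro allI impI)
  fix n assume "n < N"
  show "ereal (c / real d * real n) \<le> v ((f oo (fps_const a * fps_X ^ i)) $ n)"
  proof (cases "i dvd n")
    case True
    then obtain m where n: "n = i * m" ..
    have "m \<le> n" using n assms(4) by simp
    then have "ereal (c * real m) \<le> v (f $ m)"
      using f \<open>n < N\<close> unfolding coeffs_val_ge_def by simp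
    then have "ereal (real m * 0 + c * real m) \<le> v (a ^ m * f $ m)"
      using assms(3) by (intro v_mult_ge v_power_ge) (simp_all add: zero_ereal_def)
    moreover have "c / real d * real n \<le> c * real m"
    proof -
      have "real n \<le> real d * real m" using n \<open>i \<le> d\<close> by (simp add: mult_right_mono)
      then show ?thesis using \<open>0 \<le> c\<close> assms(4,5) by (simp add: field_simps mult_left_mono)
    qed
    ultimately show ?thesis
      using assms(4) n by (simp add: fps_compose_monom_nth) (meson ereal_less_eq(3) order_trans)
  qed (use assms(4) in \<open>simp add: fps_compose_monom_nth\<close>)
qed

end

section \<open>Dwork's splitting function\<close>

lemma geometric_sum_lower_bound:
  fixes q :: nat
  assumes "q \<ge> 1"
  shows "(q - 1) * q ^ j + (j + 2) \<le> (\<Sum>i<j + 2. q ^ i)"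
proof (induction j)
  case (Suc j)
  have sum: "(\<Sum>i<Suc j + 2. q ^ i) = (\<Sum>i<j + 2. q ^ i) + q ^ Suc (Suc j)" by simp
  have "q ^ Suc (Suc j) = (q - 1) * q ^ Suc j + q ^ Suc j"
    using assms by (simp add: algebra_simps)
  moreover have "1 \<le> q ^ Suc j" using assms by simp
  ultimately show ?case unfolding sum using Suc.IH by linarith
qed (use assms in simp)

locale dwork_setting = p_valued_field p v for p and v :: "'a::field_char_0 \<Rightarrow> ereal" +
  fixes w :: 'a
  assumes w_root: "w ^ (p - 1) = - of_nat p"
begin

lemma v_w: "v w = ereal (1 / (real p - 1))"
proof -
  have "w \<noteq> 0" using w_root p_gt_1 by (cases "p - 1") auto
  then obtain c where c: "v w = ereal c" using v_finite by blast
  have "v (w ^ (p - 1)) = ereal (real (p - 1) * c)" by (rule v_power[OF c])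
  moreover have "v (w ^ (p - 1)) = ereal 1" using w_root v_of_nat_p by (simp add: one_ereal_def)
  ultimately have "(real p - 1) * c = 1" by (metis ereal.inject real_p_minus_1)
  then show ?thesis using c real_p_minus_1_gt_0 by (simp add: field_simps)
qed

lemma coeffs_val_ge_dilate_artin_hasse:
  "coeffs_val_ge (1 / (real p - 1)) (p ^ Suc K) (fps_dilate_rat w (artin_hasse_partial p K))"
  unfolding coeffs_val_ge_def
proof (intro allI impI)
  fix n assume "n < p ^ Suc K"
  then have "0 \<le> v (of_rat (artin_hasse_partial p K $ n))"
    by (intro v_of_rat_ge p_integral_artin_hasse_partial)
  then have "ereal (real n * (1 / (real p - 1)) + 0) \<le> v (w ^ n * of_rat (artin_hasse_partial p K $ n))"
    using v_w by (intro v_mult_ge v_power_ge) (simp_all add: zero_ereal_def)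
  then show "ereal (1 / (real p - 1) * real n) \<le> v (fps_dilate_rat w (artin_hasse_partial p K) $ n)"
    by (simp add: mult.commute)
qed

lemma coeffs_val_ge_dilate_exp_monom_inverse:
  assumes "k \<ge> 2"
  shows "coeffs_val_ge ((real p - 1) / real p ^ 2) N
    (fps_dilate_rat w (fps_exp_monom (- (1 / of_nat p ^ k)) (p ^ k)))"
  unfolding coeffs_val_ge_def
proof (intro allI impI)
  fix n
  define c where "c = of_rat (- (1 / of_nat p ^ k)) * w ^ p ^ k"
  define a where "a = real p ^ k / (real p - 1) - real k"
  have "v (inverse (of_nat p ^ k)) = ereal (- real k)"
    using v_inverse[OF v_of_nat_p_power] .
  then have "ereal (- real k + real (p ^ k) * (1 / (real p - 1))) \<le> v c"
    unfolding c_def using v_w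
    by (intro v_mult_ge v_power_ge) (simp_all add: of_rat_minus of_rat_inverse of_rat_power divide_inverse)
  then have "ereal a \<le> v c" by (simp add: a_def)
  then have v_coeff: "ereal (real n / real p ^ k * (a - 1 / (real p - 1))) \<le> v (fps_exp_monom c (p ^ k) $ n)"
    using v_fps_exp_monom_nth_ge[of "p ^ k" a c n] p_gt_1 by simp
  obtain j where k: "k = j + 2" using assms by (metis add.commute le_Suc_ex)
  have "real ((p - 1) * p ^ j + k) \<le> real (\<Sum>i<k. p ^ i)"
    using geometric_sum_lower_bound[of p j] p_gt_1 k by (simp only: of_nat_le_iff)
  then have "(real p - 1) * real p ^ j \<le> (real p ^ k - 1) / (real p - 1) - real k"
    using p_gt_1 geometric_sum[of "real p" k] by (simp add: of_nat_diff)
  also have "\<dots> = a - 1 / (real p - 1)"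
    using real_p_minus_1_gt_0 by (simp add: a_def diff_divide_distrib)
  finally have "real n / real p ^ k * ((real p - 1) * real p ^ j)
      \<le> real n / real p ^ k * (a - 1 / (real p - 1))"
    by (rule mult_left_mono) simp
  moreover have "real n / real p ^ k * ((real p - 1) * real p ^ j) = (real p - 1) / real p ^ 2 * real n"
    using p_gt_1 by (simp add: k power_add power2_eq_square)
  ultimately have "ereal ((real p - 1) / real p ^ 2 * real n)
      \<le> ereal (real n / real p ^ k * (a - 1 / (real p - 1)))"
    by simp
  also note v_coeff
  finally show "ereal ((real p - 1) / real p ^ 2 * real n)
      \<le> v (fps_dilate_rat w (fps_exp_monom (- (1 / of_nat p ^ k)) (p ^ k)) $ n)"
    using p_gt_1 by (simp add: fps_dilate_rat_exp_monom c_def)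
qed

lemma coeffs_val_ge_dwork_theta_small: "coeffs_val_ge (1 / (real p - 1)) (p ^ 2) (dwork_theta p w)"
  using coeffs_val_ge_dilate_artin_hasse[of 1] dwork_theta_eq_dilate[OF w_root]
  by (simp add: power2_eq_square)

lemma coeffs_val_ge_dwork_theta: "coeffs_val_ge ((real p - 1) / real p ^ 2) N (dwork_theta p w)"
proof -
  define K where "K = Suc N"
  have "artin_hasse_partial p 1
      = artin_hasse_partial p K * (\<Prod>k\<in>{2..K}. fps_exp_monom (- (1 / of_nat p ^ k)) (p ^ k))"
    by (rule artin_hasse_partial_1_eq) (simp add: K_def)
  then have theta: "dwork_theta p w = fps_dilate_rat w (artin_hasse_partial p K)
      * (\<Prod>k\<in>{2..K}. fps_dilate_rat w (fps_exp_monom (- (1 / of_nat p ^ k)) (p ^ k)))"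
    by (simp only: dwork_theta_eq_dilate[OF w_root] fps_dilate_rat_mult fps_dilate_rat_prod)
  have "(real p - 1) * (real p - 1) \<le> real p ^ 2"
    using p_gt_1 by (simp add: power2_eq_square algebra_simps)
  then have slope: "(real p - 1) / real p ^ 2 \<le> 1 / (real p - 1)"
    using p_gt_1 by (simp add: field_simps)
  have "N < 2 ^ N" by (rule less_exp)
  also have "(2::nat) ^ N \<le> p ^ N"
    using p_gt_1 by (simp add: power_mono)
  also have "\<dots> \<le> p ^ Suc K"
    using p_gt_1 by (intro power_increasing) (simp_all add: K_def)
  finally have "N \<le> p ^ Suc K" by simp
  then show ?thesis
    unfolding theta using slope
    by (intro coeffs_val_ge_mult coeffs_val_ge_prod coeffs_val_ge_dilate_exp_monom_inverse
        coeffs_val_ge_mono[OF coeffs_val_ge_dilate_artin_hasse]) auto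
qed

lemma coeffs_val_ge_dwork_F:
  assumes "coeffs_val_ge c N (dwork_theta p w)" and "0 \<le> c" and "\<forall>i\<in>{1..d}. 0 \<le> v (a i)"
  shows "coeffs_val_ge (c / real d) N (dwork_F p w d a)"
  unfolding dwork_F_def using assms by (intro coeffs_val_ge_prod coeffs_val_ge_compose_monom) auto

end

theorem lemma3p1:
  fixes v :: "'a::field_char_0 \<Rightarrow> ereal" and p m d :: nat and a :: "nat \<Rightarrow> 'a" and w :: 'a
  assumes "prime p" and "m \<ge> 1"
    and "nonarch_val p v"
    and "w ^ (p - 1) = - of_nat p"
    and "1 \<le> d" and "d < p"
    and "\<forall>i\<in>{1..d}. a i ^ (p ^ m) = a i"
    and "\<forall>i\<in>{1..d}. v (a i) \<ge> 0"
    and "a d \<noteq> 0"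
  shows "(\<forall>i. i \<le> p^2 - 1 \<longrightarrow>
            v (fps_nth (dwork_F p w d a) i) \<ge> ereal (real i / (real d * (real p - 1))))
       \<and> (\<forall>i. i \<ge> p^2 \<longrightarrow>
            v (fps_nth (dwork_F p w d a) i) \<ge> ereal ((real p - 1) * real i / (real d * real p ^ 2)))"
proof -
  txt \<open>The bounds do not need the hypotheses on \<open>m\<close>, \<open>d\<close> and \<open>a d\<close> nor the
    Teichmueller property: of the \<open>a i\<close> only \<open>0 \<le> v (a i)\<close> is used.\<close>
  interpret dwork_setting p v w
    using assms(1,3,4) by unfold_locales
  have small: "coeffs_val_ge (1 / (real p - 1) / real d) (p ^ 2) (dwork_F p w d a)"
    using coeffs_val_ge_dwork_theta_small assms(8) real_p_minus_1_gt_0 by (intro coeffs_val_ge_dwork_F) auto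
  have large: "coeffs_val_ge ((real p - 1) / real p ^ 2 / real d) (Suc i) (dwork_F p w d a)" for i
    using coeffs_val_ge_dwork_theta assms(8) real_p_minus_1_gt_0 by (intro coeffs_val_ge_dwork_F) auto
  show ?thesis
  proof (intro conjI allI impI)
    fix i assume "i \<le> p\<^sup>2 - 1"
    moreover have "0 < p\<^sup>2" using p_gt_1 by simp
    ultimately have "i < p\<^sup>2" by linarith
    then show "ereal (real i / (real d * (real p - 1))) \<le> v (dwork_F p w d a $ i)"
      using small unfolding coeffs_val_ge_def by (simp add: ac_simps)
  next
    fix i
    show "ereal ((real p - 1) * real i / (real d * real p ^ 2)) \<le> v (dwork_F p w d a $ i)"
      using large[of i] unfolding coeffs_val_ge_def by (simp add: ac_simps)
  qed
qed

end
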